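(* Consider a chunk-based peer-to-peer streaming system as described in the context, in which every node (the source and every peer) has normalized upload capacity $U$, where $U\ge 1$ is an integer, and every node delivers chunks to at most $k$ distinct overlay neighbors, where $k\ge 1$ is an integer. Then for every integer $t\ge 0$ the stream diffusion metric satisfies $$N(t)\le \overline{N}(t):=\sum_{j=1}^{U} S_k(t-j+1),$$ and for every non-integer real $t\ge 0$ it satisfies $N(t)\le \overline{N}(\lfloor t\rfloor)$.
   Context: $k$-step Fibonacci sequence: for integers $i$, $F_k(i)=0$ if $i\le 0$, $F_k(1)=1$, and $F_k(i)=\sum_{j=1}^{k}F_k(i-j)$ for $i>1$. Its partial sums are $S_k(n)=0$ for $n\le 0$ and $S_k(n)=\sum_{i=1}^{n}F_k(i)$ for $n>0$. Model: there is a source node and a (finite or infinite) set $\mathcal P$ of peers. A stream of constant bit rate $R_{bps}$ is cut at the source into chunks of $C$ bits, so chunk $c=1,2,3,\dots$ becomes available at the source every $T=C/R_{bps}$ seconds. Every node has the same upload bandwidth $U_{bps}$, and $U=U_{bps}/R_{bps}$ is assumed to be an integer $\ge 1$. Time is measured in units of $T^*=C/U_{bps}$ (the time to transmit one chunk using a node's entire upload bandwidth); hence chunk $c$ is generated at time $(c-1)U$. A node may split its upload bandwidth arbitrarily among simultaneous transmissions, but its total upload rate is at most one chunk per time unit. Transmission is store-and-forward: a peer may forward a chunk only after it has completely received it. Download bandwidth is unlimited, and propagation and network queueing delays are zero. Each node sends chunks to at most $k$ distinct neighbors. For a chunk $c$ and a peer $p$, $d(c,p)$ is the time elapsed between the generation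 of $c$ at the source and the completion of its reception at $p$. Define $D(p)=\sup_c d(c,p)$. The stream diffusion metric is $N(t)=|\{p\in\mathcal P: D(p)\le t\}|$, i.e. the number of peers that receive every chunk within time $t$ after its generation. The bound refers to the best achievable $N(t)$ over all chunk scheduling and forwarding strategies in this model. *)

theory Defs
  imports "HOL-Analysis.Analysis"
begin

function fibk :: "nat \<Rightarrow> int \<Rightarrow> nat" where
  "fibk k i = (if i \<le> 0 then 0 else if i = 1 then 1
               else (\<Sum>j\<in>{1..k}. fibk k (i - int j)))"
  by auto
termination
  by (relation "Wellfounded.measure (\<lambda>(k, i). nat i)") auto

definition Sk :: "nat \<Rightarrow> int \<Rightarrow> nat" where
  "Sk k n = (\<Sum>i\<in>{1..n}. fibk k i)"

definition Nbar :: "nat \<Rightarrow> nat \<Rightarrow> int \<Rightarrow> nat" where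
  "Nbar k U t = (\<Sum>j\<in>{1..U}. Sk k (t - int j + 1))"

text \<open>Time is measured in units of T* = C/U_bps. A schedule is given by rate functions
  rate s r c tau >= 0: the rate (in chunks per time unit) at which node s sends chunk c
  to node r at time tau.\<close>

definition gen :: "nat \<Rightarrow> nat \<Rightarrow> real" where
  "gen U c = real ((c - 1) * U)"

definition amt :: "('a \<Rightarrow> 'a \<Rightarrow> nat \<Rightarrow> real \<Rightarrow> real) \<Rightarrow> 'a \<Rightarrow> 'a \<Rightarrow> nat \<Rightarrow> real \<Rightarrow> real" where
  "amt rate s r c \<tau> = integral {0..\<tau>} (rate s r c)"

definition holds :: "'a \<Rightarrow> nat \<Rightarrow> ('a \<Rightarrow> 'a \<Rightarrow> nat \<Rightarrow> real \<Rightarrow> real) \<Rightarrow> 'a \<Rightarrow> nat \<Rightarrow> real \<Rightarrow> bool" where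
  "holds src U rate n c \<tau> =
     (if n = src then gen U c \<le> \<tau> else (\<exists>s. 1 \<le> amt rate s n c \<tau>))"

definition valid_schedule ::
  "'a \<Rightarrow> 'a set \<Rightarrow> nat \<Rightarrow> nat \<Rightarrow> ('a \<Rightarrow> 'a \<Rightarrow> nat \<Rightarrow> real \<Rightarrow> real) \<Rightarrow> bool" where
  "valid_schedule src P U k rate \<longleftrightarrow>
     \<comment> \<open>nonnegative, integrable rates\<close>
     (\<forall>s r c \<tau>. 0 \<le> rate s r c \<tau>) \<and>
     (\<forall>s r c \<tau>. rate s r c integrable_on {0..\<tau>}) \<and>
     \<comment> \<open>transmissions only between distinct nodes, of actual chunks, at times >= 0\<close>
     (\<forall>s r c \<tau>. 0 < rate s r c \<tau> \<longrightarrow>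
        s \<in> insert src P \<and> r \<in> insert src P \<and> r \<noteq> s \<and> 1 \<le> c \<and> 0 \<le> \<tau>) \<and>
     \<comment> \<open>upload capacity: total upload rate of each node at most one chunk per time unit\<close>
     (\<forall>s \<tau> F. finite F \<longrightarrow> (\<Sum>(r, c)\<in>F. rate s r c \<tau>) \<le> 1) \<and>
     \<comment> \<open>store-and-forward: a node only sends a chunk it completely holds\<close>
     (\<forall>s r c \<tau>. 0 < rate s r c \<tau> \<longrightarrow> holds src U rate s c \<tau>) \<and>
     \<comment> \<open>each node sends chunks to at most k distinct neighbours\<close>
     (\<forall>s. finite {r. \<exists>c \<tau>. 0 < rate s r c \<tau>} \<and> card {r. \<exists>c \<tau>. 0 < rate s r c \<tau>} \<le> k)"

text \<open>Completion time of reception of chunk c at peer p (infinity if never received).\<close>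
definition recv :: "('a \<Rightarrow> 'a \<Rightarrow> nat \<Rightarrow> real \<Rightarrow> real) \<Rightarrow> 'a \<Rightarrow> nat \<Rightarrow> ereal" where
  "recv rate p c = Inf (ereal ` {\<tau>. 0 \<le> \<tau> \<and> (\<exists>s. 1 \<le> amt rate s p c \<tau>)})"

definition delay :: "nat \<Rightarrow> ('a \<Rightarrow> 'a \<Rightarrow> nat \<Rightarrow> real \<Rightarrow> real) \<Rightarrow> 'a \<Rightarrow> nat \<Rightarrow> ereal" where
  "delay U rate p c = recv rate p c - ereal (gen U c)"

definition Dmax :: "nat \<Rightarrow> ('a \<Rightarrow> 'a \<Rightarrow> nat \<Rightarrow> real \<Rightarrow> real) \<Rightarrow> 'a \<Rightarrow> ereal" where
  "Dmax U rate p = (SUP c\<in>{1..}. delay U rate p c)"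

text \<open>The set of peers whose N(t) counts: D(p) <= t.\<close>
definition diffused :: "'a set \<Rightarrow> nat \<Rightarrow> ('a \<Rightarrow> 'a \<Rightarrow> nat \<Rightarrow> real \<Rightarrow> real) \<Rightarrow> real \<Rightarrow> 'a set" where
  "diffused P U rate t = {p \<in> P. Dmax U rate p \<le> ereal t}"

end

theory Submission
  imports Defs
begin

text \<open>
  Fix a horizon t \<ge> 0.  The source can upload at most one chunk per time unit, so
  averaging over the first chunks shows that some chunk c is delivered by the source to at most
  U peers within t + e of its generation (e > 0 small).  Every peer that received c by that
  time got it completely from some sender, its parent; choosing for each such peer a parent
  and a reception time within e of its first reception yields a forest rooted at the source.
  In this forest each node has at most k children (at most U for the source), and because a
  node can only forward c after receiving it and uploads at most one chunk per time unit, the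
  children of a node arrive staggered, one per time unit after the parent's own reception.
  Counting such forests gives a recursion of k-step Fibonacci type: a node holding c with
  remaining time x has at most S_k(x + 1) descendants, up to a dilation by (1 + 2e) which
  absorbs the slack e lost per generation.  Every peer with D(p) \<le> t belongs to the forest,
  and for e small enough the dilated bound collapses to Nbar k U \<lfloor>t\<rfloor>.
\<close>

declare fibk.simps[simp del]

section \<open>Partial sums of k-step Fibonacci numbers\<close>

lemma fibk_nonpos: "i \<le> 0 \<Longrightarrow> fibk k i = 0"
  by (subst fibk.simps) simp

lemma fibk_one: "fibk k 1 = 1"
  by (subst fibk.simps) simp

lemma fibk_rec: "i \<ge> 2 \<Longrightarrow> fibk k i = (\<Sum>j\<in>{1..k}. fibk k (i - int j))"
  by (subst fibk.simps) simp

lemma Sk_nonpos: "m \<le> 0 \<Longrightarrow> Sk k m = 0"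
  unfolding Sk_def by simp

lemma Sk_step: "Sk k m = Sk k (m - 1) + fibk k m"
proof (cases "m \<le> 0")
  case True
  thus ?thesis by (simp add: Sk_nonpos fibk_nonpos)
next
  case False
  hence "{1..m} = insert m {1..m-1}" by auto
  thus ?thesis unfolding Sk_def by (simp add: add.commute)
qed

lemma Sk_mono: "m \<le> n \<Longrightarrow> Sk k m \<le> Sk k n"
proof (induction n rule: int_ge_induct)
  case (step n)
  thus ?case using Sk_step[of k "n + 1"] by simp
qed simp

text \<open>The recursion behind the bound: a node together with the subtrees hanging off its
  children sent at times 1, ..., k gives S_k(n) = 1 + sum_{i=1..k} S_k(n - i).\<close>
lemma Sk_rec: "n \<ge> 1 \<Longrightarrow> Sk k n = 1 + (\<Sum>i\<in>{1..k}. Sk k (n - int i))"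
proof (induction n rule: int_ge_induct)
  case base
  have "Sk k 1 = 1" unfolding Sk_def by (simp add: fibk_one)
  moreover have "(\<Sum>i\<in>{1..k}. Sk k (1 - int i)) = 0"
    by (rule sum.neutral) (auto simp: Sk_nonpos)
  ultimately show ?case by simp
next
  case (step n)
  have "Sk k (n+1) = Sk k n + fibk k (n+1)" using Sk_step[of k "n+1"] by simp
  also have "fibk k (n+1) = (\<Sum>j\<in>{1..k}. fibk k (n + 1 - int j))"
    using step by (intro fibk_rec) simp
  also have "Sk k n = 1 + (\<Sum>i\<in>{1..k}. Sk k (n - int i))" using step by simp
  finally have "Sk k (n+1) = 1 + (\<Sum>i\<in>{1..k}. Sk k (n - int i) + fibk k (n + 1 - int i))"
    by (simp add: sum.distrib)
  also have "(\<Sum>i\<in>{1..k}. Sk k (n - int i) + fibk k (n + 1 - int i))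
           = (\<Sum>i\<in>{1..k}. Sk k (n + 1 - int i))"
    by (rule sum.cong) (auto simp: Sk_step[of k "n + 1 - int _"])
  finally show ?case .
qed

text \<open>Dilated real extension of x \<mapsto> S_k(x + 1).  The dilation factor 1 + 2e lets the
  recursion survive a loss of e time units per generation (see Sdil_rec).\<close>
definition Sdil :: "nat \<Rightarrow> real \<Rightarrow> real \<Rightarrow> real" where
  "Sdil k e x = real (Sk k (\<lfloor>(1 + 2*e) * x\<rfloor> + 1))"

lemma Sdil_nonneg: "0 \<le> Sdil k e x"
  by (simp add: Sdil_def)

lemma Sdil_mono: "0 \<le> e \<Longrightarrow> x \<le> y \<Longrightarrow> Sdil k e x \<le> Sdil k e y"
  unfolding Sdil_def by (simp add: Sk_mono floor_mono mult_left_mono)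

lemma Sdil_shift:
  assumes "0 \<le> e" "e \<le> 1/2" "1 \<le> i"
  shows "Sdil k e (x + e - real i) \<le> real (Sk k (\<lfloor>(1 + 2*e) * x\<rfloor> + 1 - int i))"
proof -
  have "e * (2 * real i - 1 - 2*e) \<ge> 0" using assms by simp
  hence "(1 + 2*e) * (x + e - real i) \<le> (1 + 2*e) * x - real i"
    by (simp add: algebra_simps)
  hence "\<lfloor>(1 + 2*e) * (x + e - real i)\<rfloor> \<le> \<lfloor>(1 + 2*e) * x\<rfloor> - int i"
    by (metis floor_diff_of_int floor_mono of_int_of_nat_eq)
  thus ?thesis unfolding Sdil_def by (simp add: Sk_mono)
qed

lemma Sdil_rec:
  assumes "0 \<le> e" "e \<le> 1/2" "0 \<le> x"
  shows "1 + (\<Sum>i=1..k. Sdil k e (x + e - real i)) \<le> Sdil k e x"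
proof -
  let ?m = "\<lfloor>(1 + 2*e) * x\<rfloor>"
  have "(\<Sum>i=1..k. Sdil k e (x + e - real i)) \<le> (\<Sum>i=1..k. real (Sk k (?m + 1 - int i)))"
    using Sdil_shift[OF assms(1,2)] by (intro sum_mono) simp
  also have "1 + \<dots> = real (Sk k (?m + 1))"
    using Sk_rec[of "?m + 1" k] assms by simp
  finally show ?thesis unfolding Sdil_def by simp
qed

lemma Sdil_sum_le_Nbar:
  assumes "0 \<le> e" and small: "(1 + 2*e) * (t + e) < real_of_int \<lfloor>t\<rfloor> + 1"
  shows "(\<Sum>i=1..U. Sdil k e (t + e - real i)) \<le> real (Nbar k U \<lfloor>t\<rfloor>)"
proof -
  have "Sdil k e (t + e - real i) \<le> real (Sk k (\<lfloor>t\<rfloor> - int i + 1))" for i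
  proof -
    have "(1 + 2*e) * (t + e - real i) \<le> (1 + 2*e) * (t + e) - real i"
      using assms(1) by (simp add: algebra_simps)
    also have "\<dots> < real_of_int (\<lfloor>t\<rfloor> - int i + 1)" using small by simp
    finally have "\<lfloor>(1 + 2*e) * (t + e - real i)\<rfloor> \<le> \<lfloor>t\<rfloor> - int i" by linarith
    thus ?thesis unfolding Sdil_def by (simp add: Sk_mono)
  qed
  hence "(\<Sum>i=1..U. Sdil k e (t + e - real i)) \<le> (\<Sum>i=1..U. real (Sk k (\<lfloor>t\<rfloor> - int i + 1)))"
    by (intro sum_mono)
  also have "\<dots> = real (Nbar k U \<lfloor>t\<rfloor>)" by (simp add: Nbar_def)
  finally show ?thesis .
qed

lemma small_dilation_exists:
  assumes t: "0 \<le> (t::real)"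
  obtains e where "0 < e" "e \<le> 1/2" "(1 + 2*e) * (t + e) < real_of_int \<lfloor>t\<rfloor> + 1"
proof -
  define d where "d = real_of_int \<lfloor>t\<rfloor> + 1 - t"
  have d: "0 < d" unfolding d_def by linarith
  define e where "e = min (1/4) (d / (4*(t+2)))"
  have e0: "0 < e" using d t by (simp add: e_def)
  have e1: "e \<le> 1/4" unfolding e_def by (rule min.cobounded1)
  have "e \<le> d / (4*(t+2))" by (simp add: e_def)
  hence "e * (4*(t+2)) \<le> d" using t by (simp add: pos_le_divide_eq)
  have "(1 + 2*e) * (t + e) = t + e * (1 + 2*t + 2*e)" by (simp add: algebra_simps)
  also have "e * (1 + 2*t + 2*e) \<le> e * (2*t + 2)" using e0 e1 by (intro mult_left_mono) auto
  also have "e * (2*t + 2) < d"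
    using \<open>e * (4*(t+2)) \<le> d\<close> e0 t d by (simp add: algebra_simps)
  finally have "(1 + 2*e) * (t + e) < t + d" by simp
  thus ?thesis using that e0 e1 by (simp add: d_def)
qed

section \<open>Staggered arrivals and forests\<close>

text \<open>The elements of Q arrive at times f q, at most one per time unit after time \<sigma>.
  This is what a node's upload capacity imposes on the receivers it serves.\<close>
definition staggered :: "'a set \<Rightarrow> ('a \<Rightarrow> real) \<Rightarrow> real \<Rightarrow> bool" where
  "staggered Q f \<sigma> \<longleftrightarrow> (\<forall>\<tau>. real (card {q\<in>Q. f q \<le> \<tau>}) \<le> max 0 (\<tau> - \<sigma>))"

lemma staggered_subset:
  assumes "staggered Q f \<sigma>" "finite Q" "Q' \<subseteq> Q"
  shows "staggered Q' f \<sigma>"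
  unfolding staggered_def
proof
  fix \<tau>
  have "card {q\<in>Q'. f q \<le> \<tau>} \<le> card {q\<in>Q. f q \<le> \<tau>}"
    using assms(2,3) by (intro card_mono) auto
  thus "real (card {q\<in>Q'. f q \<le> \<tau>}) \<le> max 0 (\<tau> - \<sigma>)"
    using assms(1) unfolding staggered_def by (meson of_nat_le_iff order_trans)
qed

lemma staggered_earlier:
  "staggered Q f \<sigma> \<Longrightarrow> \<sigma>' \<le> \<sigma> \<Longrightarrow> staggered Q f \<sigma>'"
  unfolding staggered_def by (meson diff_left_mono max.mono order_refl order_trans)

lemma staggered_arrival:
  assumes "staggered Q f \<sigma>" "finite Q" "q \<in> Q"
  shows "\<sigma> + 1 \<le> f q"
proof -
  have "finite {x\<in>Q. f x \<le> f q}" "q \<in> {x\<in>Q. f x \<le> f q}" using assms(2,3) by auto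
  hence "0 < card {x\<in>Q. f x \<le> f q}" by (auto simp: card_gt_0_iff)
  hence "1 \<le> real (card {x\<in>Q. f x \<le> f q})" by simp
  also have "\<dots> \<le> max 0 (f q - \<sigma>)" using assms(1) unfolding staggered_def by blast
  finally show ?thesis by (simp add: max_def split: if_splits)
qed

lemma staggered_sum_le:
  assumes "finite Q" "staggered Q f \<sigma>" "antimono g"
  shows "(\<Sum>q\<in>Q. g (f q)) \<le> (\<Sum>i=1..card Q. (g (\<sigma> + real i) :: real))"
  using assms
proof (induction "card Q" arbitrary: Q)
  case 0
  thus ?case by simp
next
  case (Suc n)
  hence ne: "Q \<noteq> {}" by auto
  have "Max (f ` Q) \<in> f ` Q" using Suc.prems(1) ne by simp
  then obtain p0 where p0: "p0 \<in> Q" "f p0 = Max (f ` Q)" by auto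
  have "{q\<in>Q. f q \<le> f p0} = Q" using p0 Suc.prems(1) by auto
  hence "real (card Q) \<le> max 0 (f p0 - \<sigma>)" using Suc.prems(2) unfolding staggered_def by metis
  moreover have "real (card Q) > 0" using ne Suc.prems(1) by (simp add: card_gt_0_iff)
  ultimately have last: "\<sigma> + real (card Q) \<le> f p0" by (simp add: max_def split: if_splits)
  have card: "n = card (Q - {p0})" using Suc.hyps(2) p0 Suc.prems(1) by simp
  have "staggered (Q - {p0}) f \<sigma>"
    using Suc.prems(2,1) by (rule staggered_subset) blast
  hence IH: "(\<Sum>q\<in>Q - {p0}. g (f q)) \<le> (\<Sum>i=1..n. g (\<sigma> + real i))"
    using Suc.hyps(1)[OF card] Suc.prems(1,3) by (simp add: card[symmetric])
  have "(\<Sum>q\<in>Q. g (f q)) = g (f p0) + (\<Sum>q\<in>Q - {p0}. g (f q))"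
    using p0 Suc.prems(1) by (simp add: sum.remove)
  also have "\<dots> \<le> g (\<sigma> + real (Suc n)) + (\<Sum>i=1..n. g (\<sigma> + real i))"
    using IH last Suc.prems(3) Suc.hyps(2) by (intro add_mono) (auto dest: antimonoD)
  also have "\<dots> = (\<Sum>i=1..Suc n. g (\<sigma> + real i))" by simp
  finally show ?case using Suc.hyps(2) by simp
qed

text \<open>A forest below the root r0 (outside R) whose nodes live in [0, T], with parents at
  least 1/2 earlier than children and finitely many children per node, is finite: by
  induction on m, the nodes with time below m/2 are finite.\<close>
lemma forest_finite:
  fixes tp :: "'a \<Rightarrow> real"
  assumes par: "\<forall>p\<in>R. par p \<in> R \<or> par p = r0"
    and time: "\<forall>p\<in>R. 0 \<le> tp p \<and> tp p \<le> T"
    and earlier: "\<forall>p\<in>R. par p \<in> R \<longrightarrow> tp (par p) \<le> tp p - 1/2"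
    and children_fin: "\<forall>n. finite {q\<in>R. par q = n}"
  shows "finite R"
proof -
  define L where "L a = {p\<in>R. tp p \<le> a}" for a
  have "\<forall>a. a < real m / 2 \<longrightarrow> finite (L a)" for m :: nat
  proof (induction m)
    case 0
    have "L a = {}" if "a < 0" for a using time that by (force simp: L_def)
    thus ?case by auto
  next
    case (Suc m)
    show ?case
    proof (intro allI impI)
      fix a assume "a < real (Suc m) / 2"
      hence "finite (L (a - 1/2))" using Suc by auto
      hence "finite ({q\<in>R. par q = r0} \<union> (\<Union>n\<in>L (a - 1/2). {q\<in>R. par q = n}))"
        using children_fin by auto
      moreover have "L a \<subseteq> {q\<in>R. par q = r0} \<union> (\<Union>n\<in>L (a - 1/2). {q\<in>R. par q = n})"
        using par earlier by (fastforce simp: L_def)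
      ultimately show "finite (L a)" by (rule finite_subset[rotated])
    qed
  qed
  moreover have "T < real (nat \<lceil>2*T\<rceil> + 1) / 2"
    using real_nat_ceiling_ge[of "2*T"] by simp
  moreover have "R = L T" using time by (auto simp: L_def)
  ultimately show ?thesis by blast
qed

lemma card_le_root_weights:
  fixes h :: "'a \<Rightarrow> real"
  assumes "finite R" "r0 \<notin> R" "\<forall>p\<in>R. par p \<in> R \<or> par p = r0"
    and node: "\<forall>n\<in>R. 1 + (\<Sum>q\<in>{q\<in>R. par q = n}. h q) \<le> h n"
  shows "real (card R) \<le> (\<Sum>q\<in>{q\<in>R. par q = r0}. h q)"
proof -
  define Rin where "Rin = {q\<in>R. par q \<in> R}"
  define R0 where "R0 = {q\<in>R. par q = r0}"
  have fin: "finite Rin" "finite R0" using assms(1) by (auto simp: Rin_def R0_def)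
  have "(\<Sum>n\<in>R. 1 + (\<Sum>q\<in>{q\<in>R. par q = n}. h q)) \<le> (\<Sum>n\<in>R. h n)"
    using node by (intro sum_mono) blast
  moreover have "(\<Sum>n\<in>R. (\<Sum>q\<in>{q\<in>R. par q = n}. h q)) = (\<Sum>q\<in>Rin. h q)"
  proof -
    have "(\<Sum>n\<in>R. (\<Sum>q\<in>{q\<in>R. par q = n}. h q)) = (\<Sum>n\<in>R. (\<Sum>q\<in>{x\<in>Rin. par x = n}. h q))"
      by (rule sum.cong) (auto simp: Rin_def intro!: sum.cong)
    also have "\<dots> = (\<Sum>q\<in>Rin. h q)"
      by (rule sum.group) (use assms(1) fin in \<open>auto simp: Rin_def\<close>)
    finally show ?thesis .
  qed
  moreover have "(\<Sum>n\<in>R. h n) = (\<Sum>q\<in>Rin. h q) + (\<Sum>q\<in>R0. h q)"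
  proof -
    have "R = Rin \<union> R0" "Rin \<inter> R0 = {}" using assms(2,3) by (auto simp: Rin_def R0_def)
    thus ?thesis using fin by (simp add: sum.union_disjoint)
  qed
  ultimately show ?thesis by (simp add: sum.distrib R0_def)
qed

text \<open>Weighting a node by Sdil of its remaining time T - tp n, Sdil_rec shows the weight of a
  node dominates 1 plus that of its children.\<close>
lemma forest_card_bound:
  fixes par :: "'a \<Rightarrow> 'a" and tp :: "'a \<Rightarrow> real"
  assumes e: "0 < e" "e \<le> 1/2" and r0: "r0 \<notin> R"
    and par: "\<forall>p\<in>R. par p \<in> R \<or> par p = r0"
    and time: "\<forall>p\<in>R. 0 \<le> tp p \<and> tp p \<le> T"
    and children_fin: "\<forall>n. finite {q\<in>R. par q = n}"
    and children_k: "\<forall>n\<in>R. card {q\<in>R. par q = n} \<le> k"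
    and children_U: "card {q\<in>R. par q = r0} \<le> U"
    and stag: "\<forall>n\<in>R. staggered {q\<in>R. par q = n} tp (tp n - e)"
    and stag0: "staggered {q\<in>R. par q = r0} tp g0"
  shows "finite R \<and> real (card R) \<le> (\<Sum>i=1..U. Sdil k e (T - g0 - real i))"
proof -
  have "\<forall>p\<in>R. par p \<in> R \<longrightarrow> tp (par p) \<le> tp p - 1/2"
    using staggered_arrival[OF stag[rule_format] children_fin[rule_format]] e by force
  hence finR: "finite R" using forest_finite[OF par time _ children_fin] by blast
  define g where "g \<tau> = Sdil k e (T - \<tau>)" for \<tau>
  have g: "antimono g" "\<And>\<tau>. 0 \<le> g \<tau>"
    using e by (auto intro!: antimonoI Sdil_mono simp: g_def Sdil_nonneg)
  have "1 + (\<Sum>q\<in>{q\<in>R. par q = n}. g (tp q)) \<le> g (tp n)" if n: "n \<in> R" for n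
  proof -
    let ?C = "{q\<in>R. par q = n}"
    have "(\<Sum>q\<in>?C. g (tp q)) \<le> (\<Sum>i=1..card ?C. g (tp n - e + real i))"
      using stag n children_fin g by (intro staggered_sum_le) auto
    also have "\<dots> \<le> (\<Sum>i=1..k. g (tp n - e + real i))"
      using children_k n g by (intro sum_mono2) auto
    also have "\<dots> = (\<Sum>i=1..k. Sdil k e ((T - tp n) + e - real i))"
      by (simp add: g_def algebra_simps)
    also have "1 + \<dots> \<le> g (tp n)" unfolding g_def by (rule Sdil_rec) (use e time n in auto)
    finally show ?thesis by simp
  qed
  hence "real (card R) \<le> (\<Sum>q\<in>{q\<in>R. par q = r0}. g (tp q))"
    using card_le_root_weights[OF finR r0 par] by blast
  also have "\<dots> \<le> (\<Sum>i=1..card {q\<in>R. par q = r0}. g (g0 + real i))"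
    using stag0 children_fin g by (intro staggered_sum_le) auto
  also have "\<dots> \<le> (\<Sum>i=1..U. g (g0 + real i))"
    using children_U g by (intro sum_mono2) auto
  finally show ?thesis using finR by (simp add: g_def algebra_simps)
qed

section \<open>Upload capacity in the streaming model\<close>

locale streaming =
  fixes src :: 'a and P :: "'a set" and U k :: nat
    and rate :: "'a \<Rightarrow> 'a \<Rightarrow> nat \<Rightarrow> real \<Rightarrow> real"
  assumes valid: "valid_schedule src P U k rate"
begin

lemma rate_nonneg: "0 \<le> rate s r c \<tau>"
  using valid by (simp add: valid_schedule_def)

lemma rate_integrable: "rate s r c integrable_on {0..\<tau>}"
  using valid by (simp add: valid_schedule_def)

lemma active_sender: "0 < rate s r c \<tau> \<Longrightarrow> s \<in> insert src P"
  using valid unfolding valid_schedule_def by blast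

lemma active_time: "0 < rate s r c \<tau> \<Longrightarrow> 0 \<le> \<tau>"
  using valid unfolding valid_schedule_def by blast

lemma upload_le_one: "finite F \<Longrightarrow> (\<Sum>(r, c)\<in>F. rate s r c \<tau>) \<le> 1"
  using valid unfolding valid_schedule_def by blast

lemma active_holds: "0 < rate s r c \<tau> \<Longrightarrow> holds src U rate s c \<tau>"
  using valid unfolding valid_schedule_def by blast

lemma neighbours_finite: "finite {r. \<exists>c \<tau>. 0 < rate s r c \<tau>}"
  using valid unfolding valid_schedule_def by blast

lemma neighbours_card: "card {r. \<exists>c \<tau>. 0 < rate s r c \<tau>} \<le> k"
  using valid unfolding valid_schedule_def by blast

lemma amt_mono: "\<tau> \<le> \<tau>' \<Longrightarrow> amt rate s r c \<tau> \<le> amt rate s r c \<tau>'"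
  unfolding amt_def using rate_nonneg rate_integrable by (intro integral_subset_le) auto

lemma amt_pos_active:
  assumes "0 < amt rate s r c \<tau>"
  shows "\<exists>x\<le>\<tau>. 0 < rate s r c x"
proof (rule ccontr)
  assume "\<not> ?thesis"
  hence "\<forall>x\<in>{0..\<tau>}. rate s r c x \<le> 0" by force
  hence "amt rate s r c \<tau> \<le> integral {0..\<tau>} (\<lambda>_. 0::real)"
    unfolding amt_def using rate_integrable by (intro integral_le) auto
  thus False using assms by simp
qed

text \<open>A sender that is idle for the transfers in F before time \<sigma> has uploaded at most
  \<tau> - \<sigma> chunks' worth of them by time \<tau>: its total upload rate is at most 1.\<close>
lemma upload_budget:
  assumes "finite F" "0 \<le> \<sigma>" and idle: "\<forall>(r, c)\<in>F. \<forall>x. 0 < rate s r c x \<longrightarrow> \<sigma> \<le> x"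
  shows "(\<Sum>(r, c)\<in>F. amt rate s r c \<tau>) \<le> max 0 (\<tau> - \<sigma>)"
proof -
  define total where "total x = (\<Sum>(r, c)\<in>F. rate s r c x)" for x
  have "(\<Sum>(r, c)\<in>F. amt rate s r c \<tau>) = (\<Sum>rc\<in>F. integral {0..\<tau>} (rate s (fst rc) (snd rc)))"
    by (simp add: amt_def split_def)
  also have "\<dots> = integral {0..\<tau>} total"
    unfolding total_def split_def
    by (rule integral_sum[symmetric]) (use assms(1) rate_integrable in auto)
  also have "\<dots> \<le> integral {0..\<tau>} (\<lambda>x. if x \<in> {\<sigma>..} then 1 else 0)"
  proof (rule integral_le)
    show "total integrable_on {0..\<tau>}"
      unfolding total_def split_def
      by (rule integrable_sum) (use assms(1) rate_integrable in auto)
    show "(\<lambda>x. if x \<in> {\<sigma>..} then 1 else 0::real) integrable_on {0..\<tau>}"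
      unfolding integrable_restrict_Int by auto
    fix x
    show "total x \<le> (if x \<in> {\<sigma>..} then 1 else 0)"
    proof (cases "\<sigma> \<le> x")
      case True
      thus ?thesis using upload_le_one[OF assms(1)] by (simp add: total_def)
    next
      case False
      hence "\<forall>(r, c)\<in>F. rate s r c x = 0" using idle rate_nonneg by (fastforce simp: order_less_le)
      thus ?thesis by (simp add: total_def split_def)
    qed
  qed
  also have "\<dots> = integral ({\<sigma>..} \<inter> {0..\<tau>}) (\<lambda>_. 1::real)"
    by (rule integral_restrict_Int)
  also have "{\<sigma>..} \<inter> {0..\<tau>} = {\<sigma>..\<tau>}" using assms(2) by auto
  also have "integral {\<sigma>..\<tau>} (\<lambda>_. 1::real) \<le> max 0 (\<tau> - \<sigma>)" by simp
  finally show ?thesis .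
qed

lemma deliveries_staggered:
  assumes "finite Q" "0 \<le> \<sigma>" "\<forall>q x. 0 < rate s q c x \<longrightarrow> \<sigma> \<le> x"
    and delivered: "\<forall>q\<in>Q. 1 \<le> amt rate s q c (f q)"
  shows "staggered Q f \<sigma>"
  unfolding staggered_def
proof
  fix \<tau>
  let ?A = "{q\<in>Q. f q \<le> \<tau>}"
  have finA: "finite ?A" using assms(1) by simp
  have "real (card ?A) = (\<Sum>q\<in>?A. 1)" by simp
  also have "\<dots> \<le> (\<Sum>q\<in>?A. amt rate s q c \<tau>)"
  proof (rule sum_mono)
    fix q assume "q \<in> ?A"
    hence "1 \<le> amt rate s q c (f q)" "f q \<le> \<tau>" using delivered by auto
    thus "1 \<le> amt rate s q c \<tau>" using amt_mono[of "f q" \<tau> s q c] by linarith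
  qed
  also have "\<dots> = (\<Sum>(r, c')\<in>(\<lambda>q. (q, c)) ` ?A. amt rate s r c' \<tau>)"
    by (simp add: sum.reindex inj_on_def)
  also have "\<dots> \<le> max 0 (\<tau> - \<sigma>)"
    using finA assms(2,3) by (intro upload_budget) blast+
  finally show "real (card ?A) \<le> max 0 (\<tau> - \<sigma>)" .
qed

definition served :: "nat \<Rightarrow> real \<Rightarrow> 'a set" where
  "served c t' = {p. 1 \<le> amt rate src p c (gen U c + t')}"

lemma served_finite: "finite (served c t')"
proof (rule finite_subset[OF _ neighbours_finite])
  show "served c t' \<subseteq> {r. \<exists>c \<tau>. 0 < rate src r c \<tau>}"
  proof
    fix p assume "p \<in> served c t'"
    hence "0 < amt rate src p c (gen U c + t')" by (simp add: served_def)
    thus "p \<in> {r. \<exists>c \<tau>. 0 < rate src r c \<tau>}" using amt_pos_active by blast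
  qed
qed

text \<open>All these deliveries of the first n chunks happen by time gen U n + t', so by the
  source's upload budget there are at most (n - 1) U + t' of them.\<close>
lemma served_total:
  assumes t': "0 \<le> t'"
  shows "(\<Sum>c=1..n. real (card (served c t'))) \<le> real ((n - 1) * U) + t'"
proof -
  define \<tau> where "\<tau> = gen U n + t'"
  have "(\<Sum>c=1..n. real (card (served c t'))) \<le> (\<Sum>c=1..n. \<Sum>p\<in>served c t'. amt rate src p c \<tau>)"
  proof (rule sum_mono)
    fix c assume "c \<in> {1..n}"
    hence early: "gen U c + t' \<le> \<tau>" unfolding gen_def \<tau>_def by (simp add: mult_right_mono)
    have "\<forall>p\<in>served c t'. 1 \<le> amt rate src p c \<tau>"
    proof
      fix p assume "p \<in> served c t'"
      thus "1 \<le> amt rate src p c \<tau>" using amt_mono[OF early, of src p c] by (simp add: served_def)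
    qed
    hence "(\<Sum>p\<in>served c t'. 1::real) \<le> (\<Sum>p\<in>served c t'. amt rate src p c \<tau>)"
      by (intro sum_mono) blast
    thus "real (card (served c t')) \<le> (\<Sum>p\<in>served c t'. amt rate src p c \<tau>)" by simp
  qed
  also have "\<dots> = (\<Sum>(p, c)\<in>prod.swap ` (SIGMA c:{1..n}. served c t'). amt rate src p c \<tau>)"
    by (simp add: sum.Sigma served_finite sum.reindex)
  also have "\<dots> \<le> max 0 (\<tau> - 0)"
  proof (rule upload_budget)
    show "finite (prod.swap ` (SIGMA c:{1..n}. served c t'))" using served_finite by blast
  qed (use active_time in blast)+
  also have "\<dots> = real ((n - 1) * U) + t'" using t' by (simp add: \<tau>_def gen_def)
  finally show ?thesis .
qed

text \<open>Averaging: if each of the first n > t' chunks were served to U + 1 peers, the n (U + 1)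
  deliveries would exceed the budget (n - 1) U + t'.\<close>
lemma source_serves_few:
  assumes t': "0 \<le> t'"
  obtains c where "1 \<le> c" "card (served c t') \<le> U"
proof -
  have "\<exists>c\<ge>1. card (served c t') \<le> U"
  proof (rule ccontr)
    assume none: "\<not> ?thesis"
    define n where "n = nat \<lceil>t'\<rceil> + 1"
    have "real (n * (U + 1)) = (\<Sum>c=1..n. real (U + 1))" by (simp add: algebra_simps)
    also have "\<dots> \<le> (\<Sum>c=1..n. real (card (served c t')))"
    proof (rule sum_mono)
      fix c assume "c \<in> {1..n}"
      hence "\<not> card (served c t') \<le> U" using none by auto
      thus "real (U + 1) \<le> real (card (served c t'))" by simp
    qed
    also have "\<dots> \<le> real ((n - 1) * U) + t'" using served_total[OF t'] .
    also have "\<dots> < real ((n - 1) * U) + real n" unfolding n_def by linarith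
    also have "\<dots> \<le> real (n * (U + 1))" by (simp add: n_def algebra_simps)
    finally show False by simp
  qed
  thus ?thesis using that by blast
qed

section \<open>The distribution forest of a chunk\<close>

definition got :: "nat \<Rightarrow> 'a \<Rightarrow> real set" where
  "got c p = {\<tau>. 0 \<le> \<tau> \<and> (\<exists>s. 1 \<le> amt rate s p c \<tau>)}"

definition first_recv :: "nat \<Rightarrow> 'a \<Rightarrow> real" where
  "first_recv c p = Inf (got c p)"

definition received :: "nat \<Rightarrow> real \<Rightarrow> 'a set" where
  "received c T = {p\<in>P. \<exists>\<tau>\<in>got c p. \<tau> \<le> T}"

lemma got_bdd_below: "bdd_below (got c p)"
  unfolding got_def by (rule bdd_belowI[of _ 0]) auto

lemma first_recv_le: "\<tau> \<in> got c p \<Longrightarrow> first_recv c p \<le> \<tau>"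
  unfolding first_recv_def by (simp add: cInf_lower got_bdd_below)

lemma first_recv_nonneg: "got c p \<noteq> {} \<Longrightarrow> 0 \<le> first_recv c p"
  unfolding first_recv_def by (rule cInf_greatest) (auto simp: got_def)

lemma forwarder_got: "0 < rate s r c x \<Longrightarrow> s \<noteq> src \<Longrightarrow> x \<in> got c s"
  using active_holds[of s r c x] active_time[of s r c x] by (simp add: holds_def got_def)

lemma source_forwards_after_gen: "0 < rate src r c x \<Longrightarrow> gen U c \<le> x"
  using active_holds[of src r c x] by (simp add: holds_def)

text \<open>Each peer holding c by time T received it completely from some sender at a time
  within e of its first reception (the infimum need not be attained).\<close>
lemma received_near_first:
  assumes "0 < e" "p \<in> received c T"
  shows "\<exists>s \<tau>. 0 \<le> \<tau> \<and> \<tau> \<le> T \<and> \<tau> \<le> first_recv c p + e \<and> 1 \<le> amt rate s p c \<tau>"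
proof -
  obtain w0 where w0: "w0 \<in> got c p" "w0 \<le> T" using assms(2) by (auto simp: received_def)
  have ne: "got c p \<noteq> {}" using w0(1) by blast
  have "\<exists>w\<in>got c p. w < first_recv c p + e"
    using cInf_less_iff[OF ne got_bdd_below, of "first_recv c p + e"] assms(1)
    by (simp add: first_recv_def)
  then obtain w where w: "w \<in> got c p" "w < first_recv c p + e" ..
  have "min w w0 \<in> got c p" using w w0 by (simp add: min_def)
  moreover have "min w w0 \<le> T" "min w w0 \<le> first_recv c p + e" using w w0 by auto
  ultimately show ?thesis unfolding got_def by blast
qed

lemma diffused_subset_received:
  assumes "1 \<le> c" "0 < e"
  shows "diffused P U rate t \<subseteq> received c (gen U c + (t + e))"
proof
  fix p assume "p \<in> diffused P U rate t"
  hence p: "p \<in> P" "Dmax U rate p \<le> ereal t" by (auto simp: diffused_def)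
  have "delay U rate p c \<le> Dmax U rate p" unfolding Dmax_def using assms(1) by (intro SUP_upper) auto
  hence d: "recv rate p c - ereal (gen U c) \<le> ereal t"
    using p(2) unfolding delay_def by (rule order_trans)
  have "recv rate p c < ereal (gen U c + (t + e))"
  proof (cases "recv rate p c")
    case (real r)
    thus ?thesis using d assms(2) by simp
  qed (use d in simp_all)
  hence "Inf (ereal ` got c p) < ereal (gen U c + (t + e))" by (simp add: recv_def got_def)
  then obtain x where "x \<in> got c p" "x < gen U c + (t + e)" by (auto simp: Inf_less_iff)
  hence "\<exists>x\<in>got c p. x \<le> gen U c + (t + e)" by (auto intro: less_imp_le)
  thus "p \<in> received c (gen U c + (t + e))" using p(1) by (simp add: received_def)
qed

context
  fixes c :: nat and e T :: real and par :: "'a \<Rightarrow> 'a" and tp :: "'a \<Rightarrow> real"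
  assumes chosen: "\<forall>p\<in>received c T. 0 \<le> tp p \<and> tp p \<le> T \<and> tp p \<le> first_recv c p + e
                      \<and> 1 \<le> amt rate (par p) p c (tp p)"
begin

lemma parent_active:
  assumes "p \<in> received c T"
  shows "\<exists>x\<le>tp p. 0 < rate (par p) p c x"
proof (rule amt_pos_active)
  have "1 \<le> amt rate (par p) p c (tp p)" using chosen assms by blast
  thus "0 < amt rate (par p) p c (tp p)" by linarith
qed

lemma parent_in_forest: "p \<in> received c T \<Longrightarrow> par p \<in> received c T \<or> par p = src"
proof -
  assume p: "p \<in> received c T"
  then obtain x where x: "x \<le> tp p" "0 < rate (par p) p c x" using parent_active by blast
  show ?thesis
  proof (cases "par p = src")
    case False
    hence "par p \<in> P" "x \<in> got c (par p)"
      using active_sender[OF x(2)] forwarder_got[OF x(2)] by auto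
    moreover have "x \<le> T" using x(1) chosen p by fastforce
    ultimately show ?thesis by (auto simp: received_def)
  qed simp
qed

lemma children_neighbours: "{q\<in>received c T. par q = n} \<subseteq> {r. \<exists>c \<tau>. 0 < rate n r c \<tau>}"
  using parent_active by blast

lemma children_finite: "finite {q\<in>received c T. par q = n}"
  using children_neighbours neighbours_finite by (rule finite_subset)

lemma children_le_k: "card {q\<in>received c T. par q = n} \<le> k"
  using card_mono[OF neighbours_finite children_neighbours] neighbours_card by (rule order_trans)

text \<open>A peer starts forwarding c only after its first reception, i.e. after tp n - e.\<close>
lemma children_staggered:
  assumes n: "n \<in> received c T" "n \<noteq> src"
  shows "staggered {q\<in>received c T. par q = n} tp (tp n - e)"
proof (rule staggered_earlier)
  show "staggered {q\<in>received c T. par q = n} tp (first_recv c n)"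
  proof (rule deliveries_staggered)
    show "finite {q\<in>received c T. par q = n}" by (rule children_finite)
    have "got c n \<noteq> {}" using n(1) by (auto simp: received_def)
    thus "0 \<le> first_recv c n" by (rule first_recv_nonneg)
    show "\<forall>q x. 0 < rate n q c x \<longrightarrow> first_recv c n \<le> x"
      using first_recv_le forwarder_got n(2) by blast
    show "\<forall>q\<in>{q\<in>received c T. par q = n}. 1 \<le> amt rate n q c (tp q)"
      using chosen by blast
  qed
  have "tp n \<le> first_recv c n + e" using chosen n(1) by blast
  thus "tp n - e \<le> first_recv c n" by linarith
qed

lemma source_children_staggered: "staggered {q\<in>received c T. par q = src} tp (gen U c)"
proof (rule deliveries_staggered)
  show "finite {q\<in>received c T. par q = src}" by (rule children_finite)
  show "0 \<le> gen U c" by (simp add: gen_def)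
  show "\<forall>q x. 0 < rate src q c x \<longrightarrow> gen U c \<le> x" using source_forwards_after_gen by blast
  show "\<forall>q\<in>{q\<in>received c T. par q = src}. 1 \<le> amt rate src q c (tp q)"
    using chosen by blast
qed

end

lemma received_card_bound:
  assumes src: "src \<notin> P" and e: "0 < e" "e \<le> 1/2"
    and few: "card (served c t') \<le> U"
  shows "finite (received c (gen U c + t')) \<and>
         real (card (received c (gen U c + t'))) \<le> (\<Sum>i=1..U. Sdil k e (t' - real i))"
proof -
  let ?T = "gen U c + t'"
  let ?R = "received c ?T"
  have "\<forall>p\<in>?R. \<exists>s \<tau>. 0 \<le> \<tau> \<and> \<tau> \<le> ?T \<and> \<tau> \<le> first_recv c p + e \<and> 1 \<le> amt rate s p c \<tau>"
    using received_near_first[OF e(1)] by blast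
  from bchoice[OF this] obtain par where "\<forall>p\<in>?R. \<exists>\<tau>. 0 \<le> \<tau> \<and> \<tau> \<le> ?T
      \<and> \<tau> \<le> first_recv c p + e \<and> 1 \<le> amt rate (par p) p c \<tau>" ..
  from bchoice[OF this] obtain tp where chosen: "\<forall>p\<in>?R. 0 \<le> tp p \<and> tp p \<le> ?T
      \<and> tp p \<le> first_recv c p + e \<and> 1 \<le> amt rate (par p) p c (tp p)" ..
  have root_sub: "{q\<in>?R. par q = src} \<subseteq> served c t'"
  proof
    fix q assume "q \<in> {q\<in>?R. par q = src}"
    hence "1 \<le> amt rate src q c (tp q)" "tp q \<le> ?T" using chosen by auto
    thus "q \<in> served c t'" using amt_mono[of "tp q" ?T src q c] by (simp add: served_def)
  qed
  have root_few: "card {q\<in>?R. par q = src} \<le> U"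
    using card_mono[OF served_finite root_sub] few by linarith
  have "src \<notin> ?R" using src by (auto simp: received_def)
  have "finite ?R \<and> real (card ?R) \<le> (\<Sum>i=1..U. Sdil k e (?T - gen U c - real i))"
  proof (rule forest_card_bound[OF e \<open>src \<notin> ?R\<close> _ _ _ _ root_few])
    show "\<forall>p\<in>?R. par p \<in> ?R \<or> par p = src" using parent_in_forest[OF chosen] by blast
    show "\<forall>p\<in>?R. 0 \<le> tp p \<and> tp p \<le> ?T" using chosen by blast
    show "\<forall>n. finite {q\<in>?R. par q = n}" using children_finite[OF chosen] by blast
    show "\<forall>n\<in>?R. card {q\<in>?R. par q = n} \<le> k" using children_le_k[OF chosen] by blast
    show "\<forall>n\<in>?R. staggered {q\<in>?R. par q = n} tp (tp n - e)"
    proof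
      fix n assume n: "n \<in> ?R"
      hence "n \<noteq> src" using \<open>src \<notin> ?R\<close> by blast
      with n show "staggered {q\<in>?R. par q = n} tp (tp n - e)" by (rule children_staggered[OF chosen])
    qed
    show "staggered {q\<in>?R. par q = src} tp (gen U c)" by (rule source_children_staggered[OF chosen])
  qed
  thus ?thesis by simp
qed

lemma diffusion_bound:
  assumes src: "src \<notin> P" and t: "0 \<le> t"
  shows "finite (diffused P U rate t) \<and> card (diffused P U rate t) \<le> Nbar k U \<lfloor>t\<rfloor>"
proof -
  obtain e where e: "0 < e" "e \<le> 1/2" and small: "(1 + 2*e) * (t + e) < real_of_int \<lfloor>t\<rfloor> + 1"
    using small_dilation_exists[OF t] by blast
  have "0 \<le> t + e" using t e by simp
  then obtain c where c: "1 \<le> c" "card (served c (t + e)) \<le> U"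
    by (rule source_serves_few)
  let ?R = "received c (gen U c + (t + e))"
  have R: "finite ?R" "real (card ?R) \<le> (\<Sum>i=1..U. Sdil k e (t + e - real i))"
    using received_card_bound[OF src e c(2)] by blast+
  have sub: "diffused P U rate t \<subseteq> ?R" using diffused_subset_received[OF c(1) e(1)] .
  have "real (card (diffused P U rate t)) \<le> real (card ?R)" using card_mono[OF R(1) sub] by simp
  also have "\<dots> \<le> real (Nbar k U \<lfloor>t\<rfloor>)"
    using order_trans[OF R(2) Sdil_sum_le_Nbar[OF less_imp_le[OF e(1)] small]] .
  finally have "card (diffused P U rate t) \<le> Nbar k U \<lfloor>t\<rfloor>" by linarith
  moreover have "finite (diffused P U rate t)" using R(1) sub by (rule finite_subset[rotated])
  ultimately show ?thesis by blast
qed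

end

theorem theorem1:
  fixes src :: 'a and P :: "'a set" and U k :: nat
    and rate :: "'a \<Rightarrow> 'a \<Rightarrow> nat \<Rightarrow> real \<Rightarrow> real"
  assumes "1 \<le> U" and "1 \<le> k" and "src \<notin> P"
    and "valid_schedule src P U k rate"
  shows "(\<forall>t::nat. finite (diffused P U rate (real t)) \<and>
                    card (diffused P U rate (real t)) \<le> Nbar k U (int t)) \<and>
         (\<forall>t::real. 0 \<le> t \<and> t \<notin> \<int> \<longrightarrow>
                    finite (diffused P U rate t) \<and>
                    card (diffused P U rate t) \<le> Nbar k U \<lfloor>t\<rfloor>)"
proof -
  interpret streaming src P U k rate
    using assms(4) by unfold_locales
  show ?thesis
  proof (intro conjI allI impI)
    fix t :: nat
    show "finite (diffused P U rate (real t))" "card (diffused P U rate (real t)) \<le> Nbar k U (int t)"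
      using diffusion_bound[OF assms(3), of "real t"] by simp_all
  next
    fix t :: real assume "0 \<le> t \<and> t \<notin> \<int>"
    thus "finite (diffused P U rate t)" "card (diffused P U rate t) \<le> Nbar k U \<lfloor>t\<rfloor>"
      using diffusion_bound[OF assms(3)] by simp_all
  qed
qed

end
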